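(* Let $G$ be a group with finite generating set $S$. If $\textnormal{Geo}(G,S)$ is regular, then the geodesic skeleton subshift $X^g_{G,S}$ is sofic.
   Context: A word $w$ over $S\cup S^{-1}$ is geodesic if $|w|\le|v|$ for every word $v$ representing the same element of $G$; $\textnormal{Geo}(G,S)$ is the language of geodesic words. The skeleton subshift $X_{G,S}\subseteq(S\cup S^{-1})^{\mathbb{Z}}$ is the set of sequences none of whose non-empty finite factors represents $1_G$, and $X^g_{G,S}=\{x\in X_{G,S}\mid \text{every finite factor of }x\text{ is geodesic}\}$. A subshift over a finite alphabet is a set of bi-infinite sequences avoiding all words of a set $\mathcal F$ of forbidden finite words; it is sofic if $\mathcal F$ can be chosen to be a regular language. *)

theory Defs
  imports "HOL-Algebra.Generated_Groups"
begin

text \<open>Letters of the alphabet S \<union> S^-1: (s, False) stands for s, (s, True) for s^-1.\<close>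
type_synonym 'a letter = "'a \<times> bool"

definition alphabet :: "'a set \<Rightarrow> 'a letter set" where
  "alphabet S = S \<times> (UNIV :: bool set)"

definition letter_eval :: "('a, 'b) monoid_scheme \<Rightarrow> 'a letter \<Rightarrow> 'a" where
  "letter_eval G l = (if snd l then inv\<^bsub>G\<^esub> (fst l) else fst l)"

definition word_eval :: "('a, 'b) monoid_scheme \<Rightarrow> 'a letter list \<Rightarrow> 'a" where
  "word_eval G w = foldr (\<lambda>l g. letter_eval G l \<otimes>\<^bsub>G\<^esub> g) w \<one>\<^bsub>G\<^esub>"

definition Geo :: "('a, 'b) monoid_scheme \<Rightarrow> 'a set \<Rightarrow> 'a letter list set" where
  "Geo G S = {w \<in> lists (alphabet S).
      \<forall>v \<in> lists (alphabet S). word_eval G v = word_eval G w \<longrightarrow> length w \<le> length v}"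

definition regular_lang :: "'c set \<Rightarrow> 'c list set \<Rightarrow> bool" where
  "regular_lang A L \<longleftrightarrow> L \<subseteq> lists A \<and>
     (\<exists>(Q :: nat set) q0 (\<delta> :: nat \<Rightarrow> 'c \<Rightarrow> nat) F.
        finite Q \<and> q0 \<in> Q \<and> (\<forall>q\<in>Q. \<forall>a\<in>A. \<delta> q a \<in> Q) \<and> F \<subseteq> Q \<and>
        (\<forall>w \<in> lists A. w \<in> L \<longleftrightarrow> foldl \<delta> q0 w \<in> F))"

definition factor :: "(int \<Rightarrow> 'c) \<Rightarrow> int \<Rightarrow> nat \<Rightarrow> 'c list" where
  "factor x i n = map (\<lambda>k. x (i + int k)) [0..<n]"

definition full_shift :: "'c set \<Rightarrow> (int \<Rightarrow> 'c) set" where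
  "full_shift A = {x. \<forall>i. x i \<in> A}"

definition shift_of_forbidden :: "'c set \<Rightarrow> 'c list set \<Rightarrow> (int \<Rightarrow> 'c) set" where
  "shift_of_forbidden A F = {x \<in> full_shift A. \<forall>i n. factor x i n \<notin> F}"

definition sofic :: "'c set \<Rightarrow> (int \<Rightarrow> 'c) set \<Rightarrow> bool" where
  "sofic A X \<longleftrightarrow> (\<exists>F. regular_lang A F \<and> X = shift_of_forbidden A F)"

definition skeleton :: "('a, 'b) monoid_scheme \<Rightarrow> 'a set \<Rightarrow> (int \<Rightarrow> 'a letter) set" where
  "skeleton G S = {x \<in> full_shift (alphabet S).
      \<forall>i n. n > 0 \<longrightarrow> word_eval G (factor x i n) \<noteq> \<one>\<^bsub>G\<^esub>}"

definition geo_skeleton :: "('a, 'b) monoid_scheme \<Rightarrow> 'a set \<Rightarrow> (int \<Rightarrow> 'a letter) set" where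
  "geo_skeleton G S = {x \<in> skeleton G S. \<forall>i n. factor x i n \<in> Geo G S}"

end

theory Submission
  imports Defs
begin

text \<open>A non-empty geodesic word never represents the identity, since the empty word would be
  shorter. Hence the geodesic skeleton subshift consists of the sequences all of whose factors
  are geodesic, i.e. it is the subshift whose forbidden words are the non-geodesic ones, and this
  language is regular as the complement of a regular language.\<close>

lemma foldl_closed:
  assumes "\<forall>q\<in>Q. \<forall>a\<in>A. \<delta> q a \<in> Q" and "q \<in> Q" and "w \<in> lists A"
  shows "foldl \<delta> q w \<in> Q"
  using assms by (induction w arbitrary: q) auto

lemma regular_lang_complement:
  assumes "regular_lang A L"
  shows "regular_lang A (lists A - L)"
proof -
  from assms obtain Q q0 \<delta> F where Q: "finite (Q :: nat set)" "q0 \<in> Q"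
    and \<delta>: "\<forall>q\<in>Q. \<forall>a\<in>A. \<delta> q a \<in> Q" and F: "F \<subseteq> Q"
    and accepts: "\<forall>w \<in> lists A. w \<in> L \<longleftrightarrow> foldl \<delta> q0 w \<in> F"
    unfolding regular_lang_def by blast
  have "\<forall>w \<in> lists A. w \<in> lists A - L \<longleftrightarrow> foldl \<delta> q0 w \<in> Q - F"
    using accepts foldl_closed[OF \<delta> \<open>q0 \<in> Q\<close>] by blast
  moreover have "Q - F \<subseteq> Q" by blast
  ultimately show ?thesis
    unfolding regular_lang_def using Q \<delta> by blast
qed

lemma factor_in_lists: "x \<in> full_shift A \<Longrightarrow> factor x i n \<in> lists A"
  unfolding factor_def full_shift_def by auto

lemma length_factor [simp]: "length (factor x i n) = n"
  unfolding factor_def by simp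

lemma shift_of_forbidden_complement:
  "shift_of_forbidden A (lists A - L) = {x \<in> full_shift A. \<forall>i n. factor x i n \<in> L}"
  unfolding shift_of_forbidden_def using factor_in_lists by blast

lemma sofic_factors_in_regular:
  assumes "regular_lang A L"
  shows "sofic A {x \<in> full_shift A. \<forall>i n. factor x i n \<in> L}"
  unfolding sofic_def
  using regular_lang_complement[OF assms] shift_of_forbidden_complement by blast

lemma word_eval_Nil [simp]: "word_eval G [] = \<one>\<^bsub>G\<^esub>"
  unfolding word_eval_def by simp

lemma word_eval_Geo_neq_one:
  assumes "w \<in> Geo G S" and "w \<noteq> []"
  shows "word_eval G w \<noteq> \<one>\<^bsub>G\<^esub>"
proof
  assume "word_eval G w = \<one>\<^bsub>G\<^esub>"
  then have "length w \<le> length ([] :: 'a letter list)"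
    using assms(1) unfolding Geo_def by (auto dest: bspec[of _ _ "[]"])
  with assms(2) show False by simp
qed

lemma geo_skeleton_eq:
  "geo_skeleton G S = {x \<in> full_shift (alphabet S). \<forall>i n. factor x i n \<in> Geo G S}"
proof -
  have "word_eval G (factor x i n) \<noteq> \<one>\<^bsub>G\<^esub>"
    if "\<forall>i n. factor x i n \<in> Geo G S" and "n > 0" for x :: "int \<Rightarrow> 'a letter" and i n
  proof (rule word_eval_Geo_neq_one)
    show "factor x i n \<in> Geo G S" using that(1) by blast
    show "factor x i n \<noteq> []" using that(2) by (metis length_factor list.size(3) less_irrefl)
  qed
  then show ?thesis
    unfolding geo_skeleton_def skeleton_def by blast
qed

theorem proposition6:
  fixes G :: "('a, 'b) monoid_scheme" and S :: "'a set"
  assumes "group G"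
    and "finite S" and "S \<subseteq> carrier G" and "generate G S = carrier G"
    and "regular_lang (alphabet S) (Geo G S)"
  shows "sofic (alphabet S) (geo_skeleton G S)"
  unfolding geo_skeleton_eq using sofic_factors_in_regular[OF assms(5)] .

end
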